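(* Let $c_0>0$, $\tau_1>0$, $\alpha_2\ge 0$, and define the complex attenuation laws $$\alpha_*^{ksb}(\omega)=\frac{-i\omega}{c_0\sqrt{1-i\tau_1\omega}}+\alpha_2(-i\omega),\qquad \alpha_*^{tv}(\omega)=\frac{-i\omega}{c_0\sqrt{1-i\tau_1\omega}}-\frac{-i\omega}{c_0}\qquad(\omega\in\mathbb{R}).$$ Let $G^{ksb}$ and $G^{tv}$ be the Green functions associated with $\alpha_*^{ksb}$ and $\alpha_*^{tv}$ respectively (see context), and let $$T_1(\mathbf{x}):=\frac{|\mathbf{x}|}{c_1},\qquad \frac1{c_1}:=\frac1{c_0}+\alpha_2 .$$ Then $G^{tv}(\mathbf{x},t-T_1(\mathbf{x}))=G^{ksb}(\mathbf{x},t)$ for all $\mathbf{x}\in\mathbb{R}^3\setminus\{0\}$ and $t\in\mathbb{R}$ (as distributions in $t$).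
   Context: The square root is the principal branch. The time Fourier transform is $\hat f(\omega)=(2\pi)^{-1/2}\int_{\mathbb{R}} f(t)e^{i\omega t}\,dt$. For a complex attenuation law $\alpha_*$, the associated Green function $G(\mathbf{x},t)$ is the (distribution in $t$) whose time Fourier transform is $$\hat G(\mathbf{x},\omega)=\frac{1}{\sqrt{2\pi}}\,\frac{e^{i k(\omega)|\mathbf{x}|}}{4\pi|\mathbf{x}|},\qquad k(\omega)=i\,\alpha_*(\omega)+\frac{\omega}{c_0}.$$ This is the Green function of the dissipative wave equation $\Delta p-(D_*+\frac1{c_0}\partial_t)^2p=f$, where $D_*$ is the time-convolution operator with kernel $\mathcal{F}^{-1}\{\alpha_*\}$. *)

theory Defs
  imports "HOL-Analysis.Analysis"
begin

definition alpha_ksb :: "real \<Rightarrow> real \<Rightarrow> real \<Rightarrow> real \<Rightarrow> complex" where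
  "alpha_ksb c0 tau1 alpha2 \<omega> =
     (- \<i> * of_real \<omega>) / (of_real c0 * csqrt (1 - \<i> * of_real tau1 * of_real \<omega>))
     + of_real alpha2 * (- \<i> * of_real \<omega>)"

definition alpha_tv :: "real \<Rightarrow> real \<Rightarrow> real \<Rightarrow> complex" where
  "alpha_tv c0 tau1 \<omega> =
     (- \<i> * of_real \<omega>) / (of_real c0 * csqrt (1 - \<i> * of_real tau1 * of_real \<omega>))
     - (- \<i> * of_real \<omega>) / of_real c0"

definition wavenum :: "real \<Rightarrow> (real \<Rightarrow> complex) \<Rightarrow> real \<Rightarrow> complex" where
  "wavenum c0 alpha \<omega> = \<i> * alpha \<omega> + of_real (\<omega> / c0)"

text \<open>Time Fourier transform of the Green function at the point x.\<close>
definition green_hat :: "real \<Rightarrow> (real \<Rightarrow> complex) \<Rightarrow> real ^ 3 \<Rightarrow> real \<Rightarrow> complex" where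
  "green_hat c0 alpha x \<omega> =
     of_real (1 / sqrt (2 * pi)) * exp (\<i> * wavenum c0 alpha \<omega> * of_real (norm x))
     / of_real (4 * pi * norm x)"

definition vdiff :: "(real \<Rightarrow> complex) \<Rightarrow> real \<Rightarrow> complex" where
  "vdiff f = (\<lambda>t. vector_derivative f (at t))"

definition test_function :: "(real \<Rightarrow> complex) \<Rightarrow> bool" where
  "test_function \<phi> \<longleftrightarrow>
     (\<forall>n t. ((vdiff ^^ n) \<phi>) differentiable (at t)) \<and> compact (closure {t. \<phi> t \<noteq> 0})"

text \<open>psi(omega) = (2 pi)^(-1/2) int phi(t) e^(-i omega t) dt, so that for a function G with
  time Fourier transform Ghat (convention of the paper) int G phi dt = int Ghat psi d omega.\<close>
definition test_ft :: "(real \<Rightarrow> complex) \<Rightarrow> real \<Rightarrow> complex" where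
  "test_ft \<phi> \<omega> = of_real (1 / sqrt (2 * pi)) *
     (LINT t|lborel. \<phi> t * exp (- \<i> * of_real \<omega> * of_real t))"

text \<open>The Green function G(x, .) as a distribution in t: its action on a test function phi.\<close>
definition green :: "real \<Rightarrow> (real \<Rightarrow> complex) \<Rightarrow> real ^ 3 \<Rightarrow> (real \<Rightarrow> complex) \<Rightarrow> complex" where
  "green c0 alpha x \<phi> = (LINT \<omega>|lborel. green_hat c0 alpha x \<omega> * test_ft \<phi> \<omega>)"

end

theory Submission
  imports Defs
begin

text \<open>A shift of the wave number by the real amount \<open>\<omega> s\<close> multiplies \<open>\<hat>G\<close> by the phase
  \<open>e^{i \<omega> s |x|}\<close>, which is exactly the Fourier image of a time shift by \<open>s |x|\<close>; so the two
  Green functions differ by that delay. For the two attenuation laws the wave numbers differ by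
  \<open>\<omega> (1/c\<^sub>0 + \<alpha>\<^sub>2) = \<omega>/c\<^sub>1\<close>. The identity is purely algebraic.\<close>

lemma test_ft_shift:
  "test_ft (\<lambda>t. \<phi> (t + T)) \<omega> = exp (\<i> * of_real \<omega> * of_real T) * test_ft \<phi> \<omega>"
proof -
  have "(LINT t|lborel. \<phi> (t + T) * exp (- \<i> * of_real \<omega> * of_real t))
      = (LINT s|lborel. \<phi> s * exp (- \<i> * of_real \<omega> * of_real (s - T)))"
    using lborel_integral_real_affine[of 1 "\<lambda>s. \<phi> s * exp (- \<i> * of_real \<omega> * of_real (s - T))" T]
    by (simp add: add.commute)
  also have "\<dots> = (LINT s|lborel. exp (\<i> * of_real \<omega> * of_real T)
                     * (\<phi> s * exp (- \<i> * of_real \<omega> * of_real s)))"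
    by (rule Bochner_Integration.integral_cong) (auto simp: algebra_simps exp_diff exp_add[symmetric])
  also have "\<dots> = exp (\<i> * of_real \<omega> * of_real T)
                     * (LINT s|lborel. \<phi> s * exp (- \<i> * of_real \<omega> * of_real s))"
    by simp
  finally show ?thesis
    unfolding test_ft_def by (simp add: algebra_simps)
qed

lemma green_hat_wavenum_shift:
  assumes "wavenum c0 \<beta> \<omega> = wavenum c0 \<alpha> \<omega> + of_real (\<omega> * s)"
  shows "green_hat c0 \<beta> x \<omega> = exp (\<i> * of_real \<omega> * of_real (s * norm x)) * green_hat c0 \<alpha> x \<omega>"
  unfolding green_hat_def assms by (simp add: algebra_simps exp_add)

lemma green_time_shift:
  assumes "\<And>\<omega>. wavenum c0 \<beta> \<omega> = wavenum c0 \<alpha> \<omega> + of_real (\<omega> * s)"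
  shows "green c0 \<alpha> x (\<lambda>t. \<phi> (t + s * norm x)) = green c0 \<beta> x \<phi>"
  unfolding green_def test_ft_shift green_hat_wavenum_shift[OF assms]
  by (simp add: algebra_simps)

lemma wavenum_alpha_ksb:
  "wavenum c0 (alpha_ksb c0 tau1 alpha2) \<omega>
     = wavenum c0 (alpha_tv c0 tau1) \<omega> + of_real (\<omega> * (1 / c0 + alpha2))"
  unfolding wavenum_def alpha_ksb_def alpha_tv_def by (simp add: algebra_simps)

theorem lemma2p2:
  fixes c0 tau1 alpha2 c1 :: real and x :: "real ^ 3" and \<phi> :: "real \<Rightarrow> complex"
  assumes "c0 > 0" and "tau1 > 0" and "alpha2 \<ge> 0"
    and "1 / c1 = 1 / c0 + alpha2"
    and "x \<noteq> 0"
    and "test_function \<phi>"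
  shows "green c0 (alpha_tv c0 tau1) x (\<lambda>t. \<phi> (t + norm x / c1))
         = green c0 (alpha_ksb c0 tau1 alpha2) x \<phi>"
proof -
  have "norm x / c1 = (1 / c0 + alpha2) * norm x"
    using assms(4) by (simp add: divide_inverse mult.commute)
  then show ?thesis
    using green_time_shift[OF wavenum_alpha_ksb] by simp
qed

end
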